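(* Let $Q=\Diamond abcd$ be a convex quadrilateral with vertices $a,b,c,d$ in clockwise order, such that the diagonal $\overline{ac}$ is horizontal, $|ac|=1$, and $1$ is the diameter of $Q$. Let $\Box efgh$ be the smallest axis-parallel rectangle containing $Q$, with horizontal side length $1$ and vertical side length $W$, where $\frac{2}{\sqrt5}<W\le 1$; $a$ lies on its left side $\overline{gh}$, $b$ on its top side $\overline{he}$, $c$ on its right side $\overline{ef}$ and $d$ on its bottom side $\overline{fg}$. Assume that $\overline{ac}$ lies on or below the horizontal line through the midpoints of the left and right sides, and that $b$ lies to the right of the midpoint of the top side. Let $m_1$ be the midpoint of $\overline{ab}$ and let $z$ be the point where the perpendicular bisector of $\overline{ab}$, starting at $m_1$ and going into $Q$, meets the boundary of $Q$. If $z$ lies on the edge $\overline{cd}$, then $|m_1z|\ge \frac W2$. *)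

theory Defs
  imports "HOL-Analysis.Analysis"
begin

text \<open>Points of the plane are pairs of reals (x, y). cross u v is the z-component
  of the cross product; a strictly negative turn means a clockwise (right) turn.\<close>

definition cross :: "real \<times> real \<Rightarrow> real \<times> real \<Rightarrow> real" where
  "cross u v = fst u * snd v - snd u * fst v"

definition right_turn :: "real \<times> real \<Rightarrow> real \<times> real \<Rightarrow> real \<times> real \<Rightarrow> bool" where
  "right_turn p q r \<longleftrightarrow> cross (q - p) (r - q) < 0"

definition convex_quad_cw :: "real \<times> real \<Rightarrow> real \<times> real \<Rightarrow> real \<times> real \<Rightarrow> real \<times> real \<Rightarrow> bool" where
  "convex_quad_cw a b c d \<longleftrightarrow>
     right_turn a b c \<and> right_turn b c d \<and> right_turn c d a \<and> right_turn d a b"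

text \<open>Right-hand normal of a vector (rotation by -90 degrees); for a clockwise polygon
  it points from the edge into the polygon.\<close>
definition rnormal :: "real \<times> real \<Rightarrow> real \<times> real" where
  "rnormal v = (snd v, - fst v)"

end

theory Submission
  imports Defs
begin

text \<open>Since z lies on cd, |m1 z| is at least the distance |cross (d - c) (m1 - c)| / |cd| from m1
  to the line cd. In coordinates, 2 |cross (d - c) (m1 - c)| = W A + h (1 - p), where (A, h) = c - d
  and p is the horizontal offset of b from d. The diameter bound |bd| \<le> 1 gives p^2 + W^2 \<le> 1,
  the box gives p \<le> 2 A, and a lying at most halfway up gives h \<le> W / 2; these three facts force
  W A + h (1 - p) \<ge> W |cd|.\<close>

lemma abs_cross_le_norm_mult: "\<bar>cross u v\<bar> \<le> norm u * norm v"
proof -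
  have "(norm u * norm v)\<^sup>2 = ((fst u)\<^sup>2 + (snd u)\<^sup>2) * ((fst v)\<^sup>2 + (snd v)\<^sup>2)"
    by (simp add: norm_prod_def power_mult_distrib)
  also have "\<dots> = (cross u v)\<^sup>2 + (fst u * fst v + snd u * snd v)\<^sup>2"
    by (simp add: cross_def power2_eq_square algebra_simps)
  finally have "(cross u v)\<^sup>2 + (fst u * fst v + snd u * snd v)\<^sup>2 = (norm u * norm v)\<^sup>2" ..
  then have "(cross u v)\<^sup>2 \<le> (norm u * norm v)\<^sup>2"
    using zero_le_power2[of "fst u * fst v + snd u * snd v"] by linarith
  then show ?thesis
    using abs_le_square_iff[of "cross u v" "norm u * norm v"] by simp
qed

lemma cross_closed_segment:
  assumes "z \<in> closed_segment c d"
  shows "cross (d - c) (m - z) = cross (d - c) (m - c)"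
proof -
  obtain u where z: "z = (1 - u) *\<^sub>R c + u *\<^sub>R d"
    using assms unfolding closed_segment_def by blast
  show ?thesis
    unfolding z cross_def by (simp add: algebra_simps)
qed

lemma abs_cross_le_dist_closed_segment:
  assumes "z \<in> closed_segment c d"
  shows "\<bar>cross (d - c) (m - c)\<bar> \<le> dist c d * dist m z"
  using abs_cross_le_norm_mult[of "d - c" "m - z"] cross_closed_segment[OF assms]
  by (simp add: dist_norm norm_minus_commute)

lemma mult_sqrt_sum_squares_le:
  fixes W A h p :: real
  assumes "0 < W" "0 \<le> A" "0 \<le> h" "h \<le> W / 2" "p \<le> 2 * A" "p\<^sup>2 + W\<^sup>2 \<le> 1"
  shows "W * sqrt (A\<^sup>2 + h\<^sup>2) \<le> W * A + h * (1 - p)"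
proof -
  define k where "k = 1 - p"
  have "p\<^sup>2 < 1"
    using assms(6) zero_less_power2[of W] assms(1) by linarith
  then have "k > 0"
    by (simp add: k_def abs_square_less_1 abs_less_iff)
  have "2 * W * A * k + h * (k\<^sup>2 - W\<^sup>2) \<ge> 0"
  proof (cases "W\<^sup>2 \<le> k\<^sup>2")
    case True
    then show ?thesis
      using assms \<open>k > 0\<close> by (simp add: add_nonneg_nonneg)
  next
    case False
    have "W\<^sup>2 - k\<^sup>2 \<le> 2 * p * k"
      using assms(6) by (simp add: k_def power2_eq_square algebra_simps)
    then have "4 * A * k + k\<^sup>2 - W\<^sup>2 \<ge> k * (4 * A - 2 * p)"
      by (simp add: algebra_simps)
    moreover have "k * (4 * A - 2 * p) \<ge> 0"
      using \<open>k > 0\<close> assms by simp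
    ultimately have "(W / 2) * (4 * A * k + k\<^sup>2 - W\<^sup>2) \<ge> 0"
      using assms by simp
    moreover have "h * (k\<^sup>2 - W\<^sup>2) \<ge> (W / 2) * (k\<^sup>2 - W\<^sup>2)"
      using False assms by (intro mult_right_mono_neg) auto
    ultimately show ?thesis
      by (simp add: algebra_simps)
  qed
  moreover have "(W * A + h * k)\<^sup>2 - (W * sqrt (A\<^sup>2 + h\<^sup>2))\<^sup>2
      = h * (2 * W * A * k + h * (k\<^sup>2 - W\<^sup>2))"
    by (simp add: power_mult_distrib power2_eq_square algebra_simps)
  moreover have "h * (2 * W * A * k + h * (k\<^sup>2 - W\<^sup>2)) \<ge> 0"
    using calculation(1) assms(3) by simp
  ultimately have "(W * sqrt (A\<^sup>2 + h\<^sup>2))\<^sup>2 \<le> (W * A + h * k)\<^sup>2"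
    by linarith
  moreover have "W * A + h * k \<ge> 0"
    using assms \<open>k > 0\<close> by simp
  ultimately show ?thesis
    unfolding k_def by (rule power2_le_imp_le)
qed

theorem lemma6:
  fixes a b c d z :: "real \<times> real" and x0 y0 W t :: real
  defines "Q \<equiv> convex hull {a, b, c, d}"
  defines "m1 \<equiv> midpoint a b"
  assumes quad: "convex_quad_cw a b c d"
    and horiz: "snd a = snd c"
    and len_ac: "dist a c = 1"
    and diam: "diameter Q = 1"
    and W_bounds: "2 / sqrt 5 < W" "W \<le> 1"
    and box: "Q \<subseteq> {x0..x0 + 1} \<times> {y0..y0 + W}"
    and a_left: "fst a = x0" "y0 \<le> snd a" "snd a \<le> y0 + W"
    and b_top: "snd b = y0 + W" "x0 \<le> fst b" "fst b \<le> x0 + 1"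
    and c_right: "fst c = x0 + 1" "y0 \<le> snd c" "snd c \<le> y0 + W"
    and d_bottom: "snd d = y0" "x0 \<le> fst d" "fst d \<le> x0 + 1"
    and ac_low: "snd a \<le> y0 + W / 2"
    and b_right: "fst b > x0 + 1 / 2"
    and t_pos: "t > 0"
    and z_def: "z = m1 + t *\<^sub>R rnormal (b - a)"
    and z_bd: "z \<in> frontier Q"
    and z_cd: "z \<in> closed_segment c d"
  shows "dist m1 z \<ge> W / 2"
proof -
  define A where "A = fst c - fst d"
  define h where "h = snd c - snd d"
  define p where "p = fst b - fst d"
  have "W > 0"
    using W_bounds(1) less_trans[of 0 "2 / sqrt 5" W] by simp
  have "dist b d \<le> 1"
    using diameter_bounded_bound[of Q b d] diam
    by (simp add: Q_def hull_inc compact_imp_bounded compact_convex_hull)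
  then have bd: "p\<^sup>2 + W\<^sup>2 \<le> 1"
    using b_top d_bottom
    by (simp add: dist_prod_def dist_real_def p_def power2_abs real_sqrt_le_1_iff)
  have cross_eq: "cross (d - c) (m1 - c) = - (W * A + h * (1 - p)) / 2"
    using horiz a_left b_top c_right d_bottom
    by (simp add: A_def h_def p_def m1_def midpoint_def cross_def field_simps)
  have "W * A + h * (1 - p) \<ge> 0"
    using \<open>W > 0\<close> horiz a_left b_top c_right d_bottom
    by (simp add: A_def h_def p_def)
  have "W * sqrt (A\<^sup>2 + h\<^sup>2) \<le> W * A + h * (1 - p)"
    using bd \<open>W > 0\<close> horiz a_left ac_low b_top c_right d_bottom
    by (intro mult_sqrt_sum_squares_le) (auto simp: A_def h_def p_def)
  also have "\<dots> = 2 * \<bar>cross (d - c) (m1 - c)\<bar>"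
    using cross_eq \<open>W * A + h * (1 - p) \<ge> 0\<close> by simp
  also have "\<dots> \<le> 2 * (dist c d * dist m1 z)"
    using abs_cross_le_dist_closed_segment[OF z_cd] by simp
  finally have "W * dist c d \<le> 2 * (dist c d * dist m1 z)"
    by (simp add: dist_prod_def dist_real_def A_def h_def power2_commute)
  moreover have "c \<noteq> d"
    using quad by (auto simp: convex_quad_cw_def right_turn_def cross_def)
  ultimately show ?thesis
    by (simp add: mult.commute)
qed

end
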